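(* Let $B$ be a Batanin tree of dimension $d$ and $X$ a non-empty set of maximal positions of $B$. Then $\dim(\mathrm{fun}_X B)=d+1$ and $\partial_d(\mathrm{fun}_X B)=B$.
   Context: Batanin trees are generated inductively: for every finite list $B_1,\dots,B_n$ ($n\ge0$) of Batanin trees there is a tree $[B_1,\dots,B_n]$; $\dim[B_1,\dots,B_n]=\max_i(\dim B_i+1)$, with $\dim[\,]=0$. The suspension $\Sigma Y$ of a globular set has $0$-cells $v_-,v_+$ and $(\Sigma Y)_{n+1}=Y_n$. Positions: $\mathrm{Pos}([B_1,\dots,B_n])=\Sigma\mathrm{Pos}(B_1)\vee\cdots\vee\Sigma\mathrm{Pos}(B_n)$ (wedge sum gluing $v_+$ of each summand to $v_-$ of the next; a single point if $n=0$), with $\mathrm{inc}_i\colon\Sigma\mathrm{Pos}(B_i)\to\mathrm{Pos}(B)$ the summand inclusions. A position of $B$ is maximal if its dimension equals $\dim B$. Boundary: $\partial_0B=[\,]$, $\partial_{k+1}[B_1,\dots,B_n]=[\partial_kB_1,\dots,\partial_kB_n]$ (so $\partial_kB=B$ when $k\ge\dim B$). Functorialisation of a tree $B$ with respect to a set $X$ of maximal positions: $\mathrm{fun}_\emptyset B=B$; $\mathrm{fun}_X[\,]=[[\,]]$ for $X\neq\emptyset$; and for $X\neq\emptyset$, $\mathrm{fun}_X[B_1,\dots,B_n]=[\mathrm{fun}_{X_1}B_1,\dots,\mathrm{fun}_{X_n}B_n]$, where $X_i$ is the set of positions $p$ of $B_i$ with $\mathrm{inc}_i(\Sigma p)\in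 X$. *)

theory Defs
  imports Main
begin

datatype btree = Node "btree list"

fun tdim :: "btree \<Rightarrow> nat" where
  "tdim (Node Bs) = foldr max (map (\<lambda>b. Suc (tdim b)) Bs) 0"

fun bd :: "nat \<Rightarrow> btree \<Rightarrow> btree" where
  "bd 0 B = Node []"
| "bd (Suc k) (Node Bs) = Node (map (bd k) Bs)"

text \<open>Cells of the globular set Pos(B).  For B = [B1..Bn], Pos(B) is the wedge
  Sigma Pos(B1) v ... v Sigma Pos(Bn): its 0-cells are the n+1 vertices
  Vert 0, ..., Vert n (Vert (i-1) = v_- of the i-th summand = v_+ of the (i-1)-th),
  and its (k+1)-cells are Sub i p = inc_i(Sigma p) for p a k-cell of Pos(B_(i+1))
  (0-based index i).\<close>
datatype pos = Vert nat | Sub nat pos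

fun pdim :: "pos \<Rightarrow> nat" where
  "pdim (Vert j) = 0"
| "pdim (Sub i p) = Suc (pdim p)"

lemma size_zip_lt: "(i, b) \<in> set (zip xs Bs) \<Longrightarrow> size b < Suc (size_list size Bs)"
  by (meson less_Suc_eq_le set_zip_rightD size_list_estimation' order_refl)

function positions :: "btree \<Rightarrow> pos set" where
  "positions (Node Bs) =
     Vert ` {0..length Bs} \<union>
     (\<Union>(i, b) \<in> set (zip [0..<length Bs] Bs). Sub i ` positions b)"
  by pat_completeness auto
termination
  by (relation "measure size") (auto dest: size_zip_lt)

definition maxpos :: "btree \<Rightarrow> pos set" where
  "maxpos B = {p \<in> positions B. pdim p = tdim B}"

text \<open>Functorialisation fun_X B.  The sub-index set X_i is the set of positions p of
  B_i with inc_i(Sigma p) = Sub i p in X.\<close>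
function funct :: "pos set \<Rightarrow> btree \<Rightarrow> btree" where
  "funct X (Node Bs) =
     (if X = {} then Node Bs
      else if Bs = [] then Node [Node []]
      else Node (map (\<lambda>(i, b). funct {p \<in> positions b. Sub i p \<in> X} b)
                     (zip [0..<length Bs] Bs)))"
  by pat_completeness auto
termination
  by (relation "measure (\<lambda>(X, B). size B)") (auto dest: size_zip_lt)

end

theory Submission
  imports Defs
begin

text \<open>Functorialisation at a set X of positions of dimension d replaces, at depth d, each
  leaf reached by a position of X by a one-edge tree and leaves every other subtree alone.
  For any d \<ge> dim B this raises the dimension to exactly d + 1 and changes nothing below
  level d, which is all the boundary at d sees; both facts go by induction on B
  with d generalised, and the theorem is the case d = dim B.\<close>

definition positions_of_dim :: "nat \<Rightarrow> btree \<Rightarrow> pos set" where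
  "positions_of_dim k B = {p \<in> positions B. pdim p = k}"

definition restrict_to_child :: "pos set \<Rightarrow> nat \<Rightarrow> btree \<Rightarrow> pos set" where
  "restrict_to_child X i b = {p \<in> positions b. Sub i p \<in> X}"

lemma foldr_max_le_iff: "foldr max xs (0::nat) \<le> k \<longleftrightarrow> (\<forall>x\<in>set xs. x \<le> k)"
  by (induction xs) auto

lemma tdim_Node_le_iff: "tdim (Node Bs) \<le> k \<longleftrightarrow> (\<forall>b\<in>set Bs. Suc (tdim b) \<le> k)"
  by (simp add: foldr_max_le_iff)

lemma tdim_Node_ge: "b \<in> set Bs \<Longrightarrow> Suc (tdim b) \<le> tdim (Node Bs)"
  using tdim_Node_le_iff by blast

lemma tdim_Node_eqI:
  assumes "\<forall>c\<in>set Cs. tdim c \<le> k" and "c \<in> set Cs" and "tdim c = k"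
  shows "tdim (Node Cs) = Suc k"
  using tdim_Node_le_iff[of Cs "Suc k"] tdim_Node_ge[OF assms(2)] assms by fastforce

lemma bd_eq_self: "tdim B \<le> k \<Longrightarrow> bd k B = B"
proof (induction B arbitrary: k)
  case (Node Bs)
  show ?case
  proof (cases k)
    case 0
    then show ?thesis using Node.prems by (cases Bs) (auto simp: tdim_Node_le_iff)
  next
    case (Suc k')
    then show ?thesis using Node by (auto simp: foldr_max_le_iff intro!: map_idI)
  qed
qed

lemma positions_of_dim_Leaf: "positions_of_dim k (Node []) = (if k = 0 then {Vert 0} else {})"
  by (auto simp: positions_of_dim_def)

lemma positions_of_dim_child:
  assumes "X \<subseteq> positions_of_dim (Suc k) B"
  shows "restrict_to_child X i b \<subseteq> positions_of_dim k b"
  using assms by (auto simp: positions_of_dim_def restrict_to_child_def)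

lemma funct_empty: "funct {} B = B"
  by (cases B) simp

lemma funct_Node:
  assumes "X \<noteq> {}" and "Bs \<noteq> []"
  shows "funct X (Node Bs) =
    Node (map (\<lambda>i. funct (restrict_to_child X i (Bs ! i)) (Bs ! i)) [0..<length Bs])"
  using assms by (auto simp: restrict_to_child_def intro!: nth_equalityI)

lemma tdim_Node_leE:
  assumes "tdim (Node Bs) \<le> d" and "Bs \<noteq> []"
  obtains d' where "d = Suc d'" and "\<forall>b\<in>set Bs. tdim b \<le> d'"
  using assms by (cases d) (auto simp: foldr_max_le_iff neq_Nil_conv)

lemma bd_funct:
  "tdim B \<le> d \<Longrightarrow> X \<subseteq> positions_of_dim d B \<Longrightarrow> bd d (funct X B) = B"
proof (induction B arbitrary: X d)
  case (Node Bs)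
  consider "X = {}" | "X \<noteq> {}" "Bs = []" | "X \<noteq> {}" "Bs \<noteq> []" by blast
  then show ?case
  proof cases
    case 1
    then show ?thesis using Node.prems(1) by (simp add: funct_empty bd_eq_self)
  next
    case 2
    then show ?thesis using Node.prems(2) by (auto simp: positions_of_dim_Leaf split: if_splits)
  next
    case 3
    obtain d' where d: "d = Suc d'" and children: "\<forall>b\<in>set Bs. tdim b \<le> d'"
      using Node.prems(1) 3(2) by (rule tdim_Node_leE)
    have "bd d' (funct (restrict_to_child X i (Bs ! i)) (Bs ! i)) = Bs ! i"
      if "i < length Bs" for i
      using Node.IH[OF nth_mem[OF that]] children that positions_of_dim_child Node.prems(2) d
      by simp
    then have "map (\<lambda>i. bd d' (funct (restrict_to_child X i (Bs ! i)) (Bs ! i)))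
        [0..<length Bs] = Bs"
      by (intro nth_equalityI) simp_all
    then show ?thesis using 3 d by (simp add: funct_Node comp_def del: funct.simps)
  qed
qed

lemma tdim_funct:
  "tdim B \<le> d \<Longrightarrow> X \<subseteq> positions_of_dim d B \<Longrightarrow> X \<noteq> {} \<Longrightarrow> tdim (funct X B) = Suc d"
proof (induction B arbitrary: X d)
  case (Node Bs)
  show ?case
  proof (cases "Bs = []")
    case True
    then show ?thesis using Node.prems(2,3) by (auto simp: positions_of_dim_Leaf)
  next
    case False
    with Node.prems(1) obtain d' where d: "d = Suc d'" and children: "\<forall>b\<in>set Bs. tdim b \<le> d'"
      by (rule tdim_Node_leE)
    define C where "C i = funct (restrict_to_child X i (Bs ! i)) (Bs ! i)" for i
    have C_nonempty: "tdim (C i) = Suc d'"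
      if "i < length Bs" and "restrict_to_child X i (Bs ! i) \<noteq> {}" for i
      using Node.IH[OF nth_mem] children that positions_of_dim_child Node.prems(2) d
      unfolding C_def by simp
    have "tdim (C i) \<le> Suc d'" if "i < length Bs" for i
      using C_nonempty[OF that] children nth_mem[OF that]
      by (cases "restrict_to_child X i (Bs ! i) = {}") (auto simp: C_def funct_empty)
    moreover obtain i q where "Sub i q \<in> X" and "i < length Bs" and "q \<in> positions (Bs ! i)"
    proof -
      obtain x where x: "x \<in> X" using Node.prems(3) by blast
      then have "x \<in> positions (Node Bs)" and "pdim x = d"
        using Node.prems(2) by (auto simp: positions_of_dim_def)
      with x d that show thesis by (cases x) (auto simp: in_set_zip)
    qed
    ultimately have "tdim (Node (map C [0..<length Bs])) = Suc (Suc d')"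
      by (intro tdim_Node_eqI[where c = "C i"]) (auto simp: restrict_to_child_def intro!: C_nonempty)
    moreover have "funct X (Node Bs) = Node (map C [0..<length Bs])"
      unfolding C_def using Node.prems(3) False by (rule funct_Node)
    ultimately show ?thesis using d by simp
  qed
qed

theorem lemma4p6:
  fixes B :: btree and d :: nat and X :: "pos set"
  assumes "tdim B = d"
    and "X \<subseteq> maxpos B"
    and "X \<noteq> {}"
  shows "tdim (funct X B) = d + 1 \<and> bd d (funct X B) = B"
proof -
  have "X \<subseteq> positions_of_dim d B"
    using assms(1,2) by (simp add: maxpos_def positions_of_dim_def)
  with assms show ?thesis using tdim_funct bd_funct by simp
qed

end
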